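(* Let $n,m,T\in\mathbb{N}$, $L\in[1,T]$, and $u_{[0,T-1]}\in\mathbb{R}^{mT}$. If $u_{[0,T-1]}$ is not persistently exciting of order $n+L$, then there exist a controllable pair $(A,B)\in\mathbb{R}^{n\times n}\times\mathbb{R}^{n\times m}$ and a state sequence $x_{[0,T-L]}$ with $x(t+1)=Ax(t)+Bu(t)$ for all $t\in[0,T-L-1]$ (i.e. $\begin{bmatrix}u_{[0,T-L]}\\ x_{[0,T-L]}\end{bmatrix}\in\mathfrak{B}_{T-L+1}(A,B)$), together with $v\in\mathbb{R}^{mL}$ and $w\in\mathbb{R}^n\setminus\{0\}$, such that $$\begin{bmatrix}v^\top & w^\top\end{bmatrix}\begin{bmatrix}\mathcal{H}_L(u_{[0,T-1]})\\ \mathcal{H}_1(x_{[0,T-L]})\end{bmatrix}=0.$$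
   Context: For integers $a\le b$, $[a,b]=\{c\in\mathbb{Z}: a\le c\le b\}$. For $v:\mathbb{Z}_+\to\mathbb{R}^q$, $v_{[0,T-1]}=\begin{bmatrix}v(0)^\top & \cdots & v(T-1)^\top\end{bmatrix}^\top$. For $k\in[1,T]$ the Hankel matrix of depth $k$ is the $qk\times(T-k+1)$ block matrix $\mathcal{H}_k(v_{[0,T-1]})$ whose $(i,j)$ block ($i\in[0,k-1]$, $j\in[0,T-k]$) is $v(i+j)$; in particular $\mathcal{H}_1(x_{[0,T-L]})=\begin{bmatrix}x(0)&\cdots&x(T-L)\end{bmatrix}$. The sequence $v_{[0,T-1]}$ is persistently exciting of order $k$ if $k\le T$ and $\mathcal{H}_k(v_{[0,T-1]})$ has full row rank (if $k>T$ it is not persistently exciting of order $k$). $\mathfrak{B}_k(A,B)$ denotes the set of stacked vectors $\begin{bmatrix}u_{[0,k-1]}\\ x_{[0,k-1]}\end{bmatrix}$ with $x(t+1)=Ax(t)+Bu(t)$ for $t\in[0,k-2]$. *)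

theory Defs
  imports "HOL-Analysis.Analysis"
begin

definition mat_pow :: "real^'n^'n \<Rightarrow> nat \<Rightarrow> real^'n^'n" where
  "mat_pow A k = (((**) A) ^^ k) (mat 1)"

definition ctrb_columns :: "real^'n^'n \<Rightarrow> real^'m^'n \<Rightarrow> (real^'n) set" where
  "ctrb_columns A B = {column j (mat_pow A k ** B) | k j. k < CARD('n)}"

definition controllable :: "real^'n^'n \<Rightarrow> real^'m^'n \<Rightarrow> bool" where
  "controllable A B \<longleftrightarrow> dim (span (ctrb_columns A B)) = CARD('n)"

text \<open>Entry of the depth-k Hankel matrix of u: block (i,j) is u(i+j); row (i,a), column j.\<close>
definition hankel :: "nat \<Rightarrow> (nat \<Rightarrow> real^'m) \<Rightarrow> nat \<Rightarrow> 'm \<Rightarrow> nat \<Rightarrow> real" where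
  "hankel k u i a j = u (i + j) $ a"

definition hankel_full_row_rank :: "nat \<Rightarrow> nat \<Rightarrow> (nat \<Rightarrow> real^'m) \<Rightarrow> bool" where
  "hankel_full_row_rank T k u \<longleftrightarrow>
     (\<forall>c :: nat \<Rightarrow> real^'m.
        (\<forall>j \<le> T - k. (\<Sum>i<k. \<Sum>a\<in>UNIV. c i $ a * hankel k u i a j) = 0)
        \<longrightarrow> (\<forall>i<k. c i = 0))"

definition persistently_exciting :: "nat \<Rightarrow> nat \<Rightarrow> (nat \<Rightarrow> real^'m) \<Rightarrow> bool" where
  "persistently_exciting T k u \<longleftrightarrow> 1 \<le> k \<and> k \<le> T \<and> hankel_full_row_rank T k u"

end

theory Submission
  imports Defs "HOL-Computational_Algebra.Polynomial"
begin

text \<open>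
  A nonzero left-kernel vector of \<open>H\<^sub>n\<^sub>+\<^sub>L(u)\<close> is a row of polynomials \<open>p\<^sub>a\<close> of degree
  \<open>< n + L\<close> with \<open>\<Sum>\<^sub>a p\<^sub>a(\<sigma>) u\<^sub>a = 0\<close>, where \<open>\<sigma>\<close> is the forward shift.
  Take \<open>A = diag(\<lambda>)\<close> with distinct \<open>\<lambda>\<^sub>k\<close> that are not roots of a nonzero \<open>p\<^sub>a\<^sub>0\<close> and
  \<open>B\<^sub>k\<^sub>a = p\<^sub>a(\<lambda>\<^sub>k)\<close>; the column \<open>a\<^sub>0\<close> of \<open>B\<close> has no zero entry, so \<open>(A, B)\<close> is controllable.
  If \<open>q = \<Prod>\<^sub>k (z - \<lambda>\<^sub>k)\<close> and \<open>w\<close> holds the barycentric weights, Lagrange interpolation gives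
  \<open>q(\<sigma>)(w\<^sup>T x) = \<Sum>\<^sub>a (p\<^sub>a mod q)(\<sigma>) u\<^sub>a\<close> along every trajectory.  With \<open>v\<close> read off the
  quotients \<open>p\<^sub>a div q\<close>, which have degree \<open>< L\<close>, the sequence \<open>e = v\<^sup>T H\<^sub>L(u) + w\<^sup>T x\<close> thus
  satisfies \<open>q(\<sigma>) e = \<Sum>\<^sub>a p\<^sub>a(\<sigma>) u\<^sub>a = 0\<close>, a recurrence of order \<open>n\<close>; choosing \<open>x(0)\<close> by a
  Vandermonde system so that \<open>e\<close> vanishes at the first \<open>n\<close> times forces \<open>e = 0\<close>.
\<close>

lemma degree_div_le:
  fixes p q :: "'a::field poly"
  shows "degree (p div q) \<le> degree p - degree q"
proof (cases "q = 0 \<or> p div q = 0")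
  case False
  then have "q \<noteq> 0" "p div q \<noteq> 0" by auto
  have "degree (p mod q) < degree (p div q * q) \<or> p mod q = 0"
    using degree_mod_less[OF \<open>q \<noteq> 0\<close>, of p] degree_mult_eq[OF \<open>p div q \<noteq> 0\<close> \<open>q \<noteq> 0\<close>] by auto
  then have "degree p = degree (p div q * q)"
    by (metis add.right_neutral degree_add_eq_left div_mult_mod_eq)
  then show ?thesis
    using degree_mult_eq[OF \<open>p div q \<noteq> 0\<close> \<open>q \<noteq> 0\<close>] by simp
qed auto

lemma poly_eq_sum_lessThan:
  fixes p :: "'a::comm_semiring_1 poly"
  assumes "degree p < K"
  shows "poly p x = (\<Sum>i<K. coeff p i * x ^ i)"
  unfolding poly_altdef using assms
  by (intro sum.mono_neutral_left) (auto simp: coeff_eq_0)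

lemma inj_avoiding_roots:
  fixes p :: "'a::{field,ring_char_0} poly"
  assumes "p \<noteq> 0"
  shows "\<exists>lam :: 'n::finite \<Rightarrow> 'a. inj lam \<and> (\<forall>k. poly p (lam k) \<noteq> 0)"
proof -
  have "infinite {x. poly p x \<noteq> 0}"
    using poly_roots_finite[OF assms] infinite_UNIV_char_0[where 'a='a]
    by (metis (mono_tags) finite_Collect_not)
  then obtain g :: "nat \<Rightarrow> 'a" where "inj g" "range g \<subseteq> {x. poly p x \<noteq> 0}"
    using infinite_countable_subset by blast
  then show ?thesis
    by (intro exI[of _ "g \<circ> to_nat"]) (auto intro: inj_compose)
qed

text \<open>\<open>shift_apply P s j\<close> is \<open>(P(\<sigma>) s)(j)\<close> for the forward shift \<open>(\<sigma> s)(t) = s(t + 1)\<close>.\<close>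

definition shift_apply :: "'a::comm_ring_1 poly \<Rightarrow> (nat \<Rightarrow> 'a) \<Rightarrow> nat \<Rightarrow> 'a" where
  "shift_apply P s j = (\<Sum>r\<le>degree P. coeff P r * s (j + r))"

lemma shift_apply_eq_sum:
  assumes "degree P < K"
  shows "shift_apply P s j = (\<Sum>r<K. coeff P r * s (j + r))"
  unfolding shift_apply_def using assms
  by (intro sum.mono_neutral_left) (auto simp: coeff_eq_0)

lemma shift_apply_0 [simp]: "shift_apply 0 s j = 0"
  by (simp add: shift_apply_def)

lemma shift_apply_add: "shift_apply (P + Q) s j = shift_apply P s j + shift_apply Q s j"
proof -
  let ?K = "Suc (max (degree P) (degree Q))"
  have "shift_apply (P + Q) s j = (\<Sum>r<?K. coeff (P + Q) r * s (j + r))"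
    by (rule shift_apply_eq_sum) (simp add: degree_add_le less_Suc_eq_le)
  also have "\<dots> = shift_apply P s j + shift_apply Q s j"
    by (simp add: shift_apply_eq_sum[of _ ?K] sum.distrib algebra_simps)
  finally show ?thesis .
qed

lemma shift_apply_smult: "shift_apply (smult c P) s j = c * shift_apply P s j"
proof -
  have "shift_apply (smult c P) s j = (\<Sum>r<Suc (degree P). coeff (smult c P) r * s (j + r))"
    by (rule shift_apply_eq_sum) (simp add: less_Suc_eq_le degree_smult_le)
  then show ?thesis
    by (simp add: shift_apply_eq_sum[of P "Suc (degree P)"] sum_distrib_left mult.assoc del: sum.lessThan_Suc)
qed

lemma shift_apply_sum: "shift_apply (\<Sum>k\<in>A. P k) s j = (\<Sum>k\<in>A. shift_apply (P k) s j)"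
  by (induction A rule: infinite_finite_induct) (auto simp: shift_apply_add)

lemma shift_apply_pCons: "shift_apply (pCons a P) s j = a * s j + shift_apply P s (Suc j)"
proof -
  let ?d = "Suc (degree P)"
  have "shift_apply (pCons a P) s j = (\<Sum>r<Suc ?d. coeff (pCons a P) r * s (j + r))"
    by (rule shift_apply_eq_sum) (simp add: less_Suc_eq_le degree_pCons_le)
  also have "\<dots> = a * s j + (\<Sum>r<?d. coeff P r * s (Suc j + r))"
    by (subst sum.lessThan_Suc_shift) simp
  also have "\<dots> = a * s j + shift_apply P s (Suc j)"
    by (simp add: shift_apply_eq_sum[of P ?d] del: sum.lessThan_Suc)
  finally show ?thesis .
qed

lemma shift_apply_mult: "shift_apply (P * Q) s j = shift_apply P (shift_apply Q s) j"
  by (induction P arbitrary: j rule: pCons_induct)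
    (simp_all add: shift_apply_add shift_apply_smult shift_apply_pCons)

lemma shift_apply_linear:
  "shift_apply P (\<lambda>t. \<Sum>a\<in>A. c a * s a t) j = (\<Sum>a\<in>A. c a * shift_apply P (s a) j)"
  unfolding shift_apply_def by (simp add: sum_distrib_left sum.swap[of _ A] algebra_simps)

lemma shift_apply_seq_add:
  "shift_apply P (\<lambda>t. s t + s' t) j = shift_apply P s j + shift_apply P s' j"
  unfolding shift_apply_def by (simp add: sum.distrib algebra_simps)

lemma shift_apply_first_order:
  assumes "\<And>t. s (Suc t) = c * s t + g t"
  shows "shift_apply (P * [:-c, 1:]) s j = shift_apply P g j"
proof -
  have "shift_apply [:-c, 1:] s = g"
    by (simp add: fun_eq_iff shift_apply_pCons assms)
  then show ?thesis by (simp only: shift_apply_mult)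
qed

lemma shift_apply_recurrence_zero:
  fixes P :: "'a::idom poly"
  assumes "P \<noteq> 0"
    and "\<And>j. j + degree P \<le> M \<Longrightarrow> shift_apply P s j = 0"
    and "\<And>t. t < degree P \<Longrightarrow> s t = 0"
  shows "t \<le> M \<Longrightarrow> s t = 0"
proof (induction t rule: less_induct)
  case (less t)
  show ?case
  proof (cases "t < degree P")
    case False
    define j where "j = t - degree P"
    have t: "t = j + degree P" using False by (simp add: j_def)
    have "(\<Sum>r<degree P. coeff P r * s (j + r)) = 0"
      using less t by (intro sum.neutral) auto
    then have "shift_apply P s j = coeff P (degree P) * s t"
      by (simp add: shift_apply_def lessThan_Suc_atMost[symmetric] t)
    then show ?thesis using assms(1,2) less.prems t by simp
  qed (use assms(3) in auto)
qed

definition node_poly :: "('n::finite \<Rightarrow> 'a::field) \<Rightarrow> 'a poly" where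
  "node_poly lam = (\<Prod>k\<in>UNIV. [:-lam k, 1:])"

definition node_cofactor :: "('n::finite \<Rightarrow> 'a::field) \<Rightarrow> 'n \<Rightarrow> 'a poly" where
  "node_cofactor lam k = (\<Prod>j\<in>UNIV-{k}. [:-lam j, 1:])"

definition barycentric_weight :: "('n::finite \<Rightarrow> 'a::field) \<Rightarrow> 'n \<Rightarrow> 'a" where
  "barycentric_weight lam k = inverse (poly (node_cofactor lam k) (lam k))"

definition lagrange_basis :: "('n::finite \<Rightarrow> 'a::field) \<Rightarrow> 'n \<Rightarrow> 'a poly" where
  "lagrange_basis lam k = smult (barycentric_weight lam k) (node_cofactor lam k)"

definition lagrange_interp :: "('n::finite \<Rightarrow> 'a::field) \<Rightarrow> ('n \<Rightarrow> 'a) \<Rightarrow> 'a poly" where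
  "lagrange_interp lam y = (\<Sum>k\<in>UNIV. smult (y k) (lagrange_basis lam k))"

lemma node_poly_split: "node_poly lam = node_cofactor lam k * [:-lam k, 1:]"
  unfolding node_poly_def node_cofactor_def by (subst prod.remove[of _ k]) (simp_all add: mult.commute)

lemma degree_node_poly: "degree (node_poly (lam :: 'n::finite \<Rightarrow> 'a::field)) = CARD('n)"
  unfolding node_poly_def by (subst degree_prod_eq_sum_degree) auto

lemma node_poly_nonzero: "node_poly lam \<noteq> 0"
  unfolding node_poly_def by (simp add: prod_zero_iff)

lemma degree_node_cofactor:
  "degree (node_cofactor (lam :: 'n::finite \<Rightarrow> 'a::field) k) = CARD('n) - 1"
  unfolding node_cofactor_def by (subst degree_prod_eq_sum_degree) (auto simp: card_Diff_singleton)

lemma degree_lagrange_basis: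
  "degree (lagrange_basis (lam :: 'n::finite \<Rightarrow> 'a::field) k) < CARD('n)"
  using degree_node_cofactor[of lam k] degree_smult_le[of "barycentric_weight lam k" "node_cofactor lam k"]
    zero_less_card_finite[where 'a='n]
  unfolding lagrange_basis_def by linarith

lemma poly_node_cofactor_nonzero: "inj lam \<Longrightarrow> poly (node_cofactor lam k) (lam k) \<noteq> 0"
  unfolding node_cofactor_def by (auto simp: poly_prod inj_def)

lemma barycentric_weight_nonzero: "inj lam \<Longrightarrow> barycentric_weight lam k \<noteq> 0"
  by (simp add: barycentric_weight_def poly_node_cofactor_nonzero)

lemma poly_lagrange_basis:
  assumes "inj lam"
  shows "poly (lagrange_basis lam k) (lam j) = (if j = k then 1 else 0)"
proof (cases "j = k")
  case False
  then have "poly (node_cofactor lam k) (lam j) = 0"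
    unfolding node_cofactor_def by (simp add: poly_prod) (metis DiffI UNIV_I singletonD)
  then show ?thesis using False by (simp add: lagrange_basis_def)
qed (simp add: lagrange_basis_def barycentric_weight_def poly_node_cofactor_nonzero[OF assms])

lemma poly_lagrange_interp: "inj lam \<Longrightarrow> poly (lagrange_interp lam y) (lam j) = y j"
  by (simp add: lagrange_interp_def poly_sum poly_lagrange_basis if_distrib cong: if_cong)

lemma degree_lagrange_interp:
  "degree (lagrange_interp (lam :: 'n::finite \<Rightarrow> 'a::field) y) < CARD('n)"
  unfolding lagrange_interp_def
  by (intro degree_sum_less) (auto intro: le_less_trans[OF degree_smult_le] degree_lagrange_basis)

lemma lagrange_interp_unique:
  fixes lam :: "'n::finite \<Rightarrow> 'a::field"
  assumes "inj lam" and "degree p < CARD('n)"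
  shows "lagrange_interp lam (\<lambda>k. poly p (lam k)) = p"
proof (rule poly_eqI_degree[of "range lam"])
  show "card (range lam) > degree p" "card (range lam) > degree (lagrange_interp lam (\<lambda>k. poly p (lam k)))"
    using assms degree_lagrange_interp by (simp_all add: card_image)
qed (use assms poly_lagrange_interp in auto)

lemma mod_node_poly:
  fixes lam :: "'n::finite \<Rightarrow> 'a::field"
  assumes "inj lam"
  shows "p mod node_poly lam = lagrange_interp lam (\<lambda>k. poly p (lam k))"
proof -
  have "poly (node_poly lam) (lam k) = 0" for k
    by (simp add: node_poly_split[of lam k])
  then have "lagrange_interp lam (\<lambda>k. poly p (lam k)) = lagrange_interp lam (\<lambda>k. poly (p mod node_poly lam) (lam k))"
    by (simp add: poly_mod)
  also have "\<dots> = p mod node_poly lam"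
    using degree_mod_less[OF node_poly_nonzero, of p lam] degree_node_poly[of lam]
    by (intro lagrange_interp_unique assms) auto
  finally show ?thesis by simp
qed

lemma lagrange_basis_moments:
  fixes lam :: "'n::finite \<Rightarrow> 'a::field"
  assumes "inj lam" and "t < CARD('n)"
  shows "(\<Sum>k\<in>UNIV. lam k ^ t * coeff (lagrange_basis lam k) s) = (if s = t then 1 else 0)"
proof -
  have "lagrange_interp lam (\<lambda>k. lam k ^ t) = monom 1 t"
    using lagrange_interp_unique[OF assms(1), of "monom 1 t"] assms(2)
    by (simp add: poly_monom degree_monom_eq)
  then show ?thesis
    by (metis (no_types, lifting) coeff_monom coeff_smult coeff_sum lagrange_interp_def sum.cong)
qed

lemma vandermonde_solvable:
  fixes lam :: "'n::finite \<Rightarrow> 'a::field"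
  assumes "inj lam"
  shows "\<exists>y. \<forall>t<CARD('n). (\<Sum>k\<in>UNIV. lam k ^ t * y k) = G t"
proof (intro exI allI impI)
  fix t assume t: "t < CARD('n)"
  let ?y = "\<lambda>k. \<Sum>s<CARD('n). coeff (lagrange_basis lam k) s * G s"
  have "(\<Sum>k\<in>UNIV. lam k ^ t * ?y k) = (\<Sum>s<CARD('n). (\<Sum>k\<in>UNIV. lam k ^ t * coeff (lagrange_basis lam k) s) * G s)"
    by (simp add: sum_distrib_left sum_distrib_right sum.swap[of _ UNIV] mult.assoc)
  also have "\<dots> = (\<Sum>s<CARD('n). if s = t then G s else 0)"
    by (intro sum.cong) (simp_all add: lagrange_basis_moments[OF assms t])
  also have "\<dots> = G t"
    using t by simp
  finally show "(\<Sum>k\<in>UNIV. lam k ^ t * ?y k) = G t" .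
qed

definition diag_mat :: "('n::finite \<Rightarrow> real) \<Rightarrow> real^'n^'n" where
  "diag_mat lam = (\<chi> i j. if i = j then lam i else 0)"

lemma diag_mat_vector_mult [simp]: "(diag_mat lam *v y) $ i = lam i * y $ i"
  unfolding diag_mat_def matrix_vector_mult_def by (subst sum.remove[of _ i]) auto

lemma diag_mat_mult [simp]: "(diag_mat lam ** B) $ i $ a = lam i * B $ i $ a"
  unfolding diag_mat_def matrix_matrix_mult_def by (subst sum.remove[of _ i]) auto

lemma mat_pow_diag_mat: "mat_pow (diag_mat lam) t = diag_mat (\<lambda>i. lam i ^ t)"
proof (induction t)
  case 0
  then show ?case by (simp add: mat_pow_def mat_def diag_mat_def)
next
  case (Suc t)
  then show ?case
    by (simp add: mat_pow_def vec_eq_iff) (simp add: diag_mat_def)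
qed

lemma controllable_diag_mat:
  fixes lam :: "'n::finite \<Rightarrow> real" and B :: "real^'m^'n"
  assumes "inj lam" and "\<And>k. B $ k $ a \<noteq> 0"
  shows "controllable (diag_mat lam) B"
proof -
  have "axis i 1 \<in> span (ctrb_columns (diag_mat lam) B)" for i
  proof -
    define V where
      "V = (\<Sum>t<CARD('n). coeff (lagrange_basis lam i) t *\<^sub>R column a (mat_pow (diag_mat lam) t ** B))"
    have "V \<in> span (ctrb_columns (diag_mat lam) B)"
      unfolding V_def ctrb_columns_def by (intro span_sum span_mul span_base) blast
    moreover have "V = B $ i $ a *\<^sub>R axis i 1"
    proof -
      have "V $ k = poly (lagrange_basis lam i) (lam k) * B $ k $ a" for k
        by (simp add: V_def column_def mat_pow_diag_mat sum_distrib_right mult.assoc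
            poly_eq_sum_lessThan[OF degree_lagrange_basis])
      then show ?thesis
        by (simp add: vec_eq_iff poly_lagrange_basis[OF assms(1)] axis_def)
    qed
    ultimately show ?thesis
      using assms(2)[of i] span_mul[of V _ "inverse (B $ i $ a)"] by simp
  qed
  then have "Basis \<subseteq> span (ctrb_columns (diag_mat lam) B)"
    by (auto simp: Basis_vec_def)
  then have "span (ctrb_columns (diag_mat lam) B) = UNIV"
    by (metis span_Basis span_minimal subspace_span top.extremum_unique)
  then show ?thesis by (simp add: controllable_def)
qed

definition state_trajectory ::
  "real^'n^'n \<Rightarrow> real^'m^'n \<Rightarrow> (nat \<Rightarrow> real^'m) \<Rightarrow> real^'n \<Rightarrow> nat \<Rightarrow> real^'n" where
  "state_trajectory A B u x0 t = rec_nat x0 (\<lambda>t x. A *v x + B *v u t) t"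

lemma state_trajectory_0 [simp]: "state_trajectory A B u x0 0 = x0"
  by (simp add: state_trajectory_def)

lemma state_trajectory_Suc [simp]:
  "state_trajectory A B u x0 (Suc t) = A *v state_trajectory A B u x0 t + B *v u t"
  by (simp add: state_trajectory_def)

lemma state_trajectory_diag_mat:
  "state_trajectory (diag_mat lam) B u x0 t $ k
     = lam k ^ t * x0 $ k + state_trajectory (diag_mat lam) B u 0 t $ k"
  by (induction t) (simp_all add: algebra_simps)

lemma diag_output_prescribed:
  fixes lam :: "'n::finite \<Rightarrow> real" and w :: "real^'n"
  assumes "inj lam" and "\<And>k. w $ k \<noteq> 0"
  shows "\<exists>x0. \<forall>t<CARD('n). w \<bullet> state_trajectory (diag_mat lam) B u x0 t = G t"
proof -
  let ?z = "state_trajectory (diag_mat lam) B u 0"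
  obtain y where y: "\<And>t. t < CARD('n) \<Longrightarrow> (\<Sum>k\<in>UNIV. lam k ^ t * y k) = G t - w \<bullet> ?z t"
    using vandermonde_solvable[OF assms(1), of "\<lambda>t. G t - w \<bullet> ?z t"] by blast
  let ?x0 = "\<chi> k. y k / w $ k"
  have "w \<bullet> state_trajectory (diag_mat lam) B u ?x0 t = (\<Sum>k\<in>UNIV. lam k ^ t * y k) + w \<bullet> ?z t" for t
    unfolding inner_vec_def state_trajectory_diag_mat[of lam B u ?x0 t]
    by (simp add: algebra_simps sum.distrib assms(2))
  with y show ?thesis by (intro exI[of _ ?x0]) simp
qed

lemma shift_apply_node_poly_diag_output:
  fixes lam :: "'n::finite \<Rightarrow> real"
  shows "shift_apply (node_poly lam)
           (\<lambda>t. vec_lambda (barycentric_weight lam) \<bullet> state_trajectory (diag_mat lam) B u x0 t) j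
         = (\<Sum>a\<in>UNIV. shift_apply (lagrange_interp lam (\<lambda>k. B $ k $ a)) (\<lambda>s. u s $ a) j)"
proof -
  let ?x = "state_trajectory (diag_mat lam) B u x0"
  have mode: "shift_apply (node_poly lam) (\<lambda>t. ?x t $ k) j
      = (\<Sum>a\<in>UNIV. B $ k $ a * shift_apply (node_cofactor lam k) (\<lambda>s. u s $ a) j)" for k
  proof -
    have "shift_apply (node_poly lam) (\<lambda>t. ?x t $ k) j
        = shift_apply (node_cofactor lam k) (\<lambda>t. \<Sum>a\<in>UNIV. B $ k $ a * u t $ a) j"
      unfolding node_poly_split[of lam k]
      by (rule shift_apply_first_order) (simp add: matrix_vector_mult_def[of B])
    then show ?thesis by (simp add: shift_apply_linear)
  qed
  have "shift_apply (node_poly lam) (\<lambda>t. vec_lambda (barycentric_weight lam) \<bullet> ?x t) j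
      = (\<Sum>k\<in>UNIV. \<Sum>a\<in>UNIV. barycentric_weight lam k * B $ k $ a
                                * shift_apply (node_cofactor lam k) (\<lambda>s. u s $ a) j)"
    by (simp add: inner_vec_def shift_apply_linear mode sum_distrib_left mult.assoc)
  also have "\<dots> = (\<Sum>a\<in>UNIV. shift_apply (lagrange_interp lam (\<lambda>k. B $ k $ a)) (\<lambda>s. u s $ a) j)"
    by (subst sum.swap)
      (simp add: lagrange_interp_def lagrange_basis_def shift_apply_sum shift_apply_smult algebra_simps)
  finally show ?thesis .
qed

lemma shift_apply_node_poly_quotient_output:
  fixes lam :: "'n::finite \<Rightarrow> real" and p :: "'m::finite \<Rightarrow> real poly"
    and u :: "nat \<Rightarrow> real^'m" and x0 :: "real^'n"
  assumes "inj lam"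
  defines "q \<equiv> node_poly lam"
    and "x \<equiv> state_trajectory (diag_mat lam) (\<chi> k a. poly (p a) (lam k)) u x0"
  shows "shift_apply q (\<lambda>t. (\<Sum>a\<in>UNIV. shift_apply (p a div q) (\<lambda>s. u s $ a) t)
                               + vec_lambda (barycentric_weight lam) \<bullet> x t) j
           = (\<Sum>a\<in>UNIV. shift_apply (p a) (\<lambda>s. u s $ a) j)"
proof -
  have "shift_apply q (\<lambda>t. \<Sum>a\<in>UNIV. shift_apply (p a div q) (\<lambda>s. u s $ a) t) j
      = (\<Sum>a\<in>UNIV. shift_apply (q * (p a div q)) (\<lambda>s. u s $ a) j)"
    using shift_apply_linear[where c="\<lambda>_. 1"] by (simp add: shift_apply_mult)
  moreover have "shift_apply q (\<lambda>t. vec_lambda (barycentric_weight lam) \<bullet> x t) j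
      = (\<Sum>a\<in>UNIV. shift_apply (p a mod q) (\<lambda>s. u s $ a) j)"
    by (simp add: q_def x_def shift_apply_node_poly_diag_output mod_node_poly[OF assms(1)])
  ultimately show ?thesis
    by (simp add: shift_apply_seq_add sum.distrib[symmetric] shift_apply_add[symmetric])
qed

lemma diag_output_cancels_quotients:
  fixes lam :: "'n::finite \<Rightarrow> real" and p :: "'m::finite \<Rightarrow> real poly"
  assumes "inj lam"
    and "\<And>j. j + CARD('n) \<le> M \<Longrightarrow> (\<Sum>a\<in>UNIV. shift_apply (p a) (\<lambda>s. u s $ a) j) = 0"
  obtains x0 where "\<And>t. t \<le> M \<Longrightarrow> (\<Sum>a\<in>UNIV. shift_apply (p a div node_poly lam) (\<lambda>s. u s $ a) t)
      + vec_lambda (barycentric_weight lam) \<bullet> state_trajectory (diag_mat lam) (\<chi> k a. poly (p a) (lam k)) u x0 t = 0"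
proof -
  let ?y = "\<lambda>t. \<Sum>a\<in>UNIV. shift_apply (p a div node_poly lam) (\<lambda>s. u s $ a) t"
  let ?x = "state_trajectory (diag_mat lam) (\<chi> k a. poly (p a) (lam k)) u"
  obtain x0 where x0: "\<And>t. t < CARD('n) \<Longrightarrow> vec_lambda (barycentric_weight lam) \<bullet> ?x x0 t = - ?y t"
    using diag_output_prescribed[OF assms(1), of "vec_lambda (barycentric_weight lam)" _ u "\<lambda>t. - ?y t"]
    by (auto simp: barycentric_weight_nonzero[OF assms(1)])
  have "?y t + vec_lambda (barycentric_weight lam) \<bullet> ?x x0 t = 0" if "t \<le> M" for t
  proof (rule shift_apply_recurrence_zero[OF node_poly_nonzero _ _ that])
    fix j assume "j + degree (node_poly lam) \<le> M"
    then show "shift_apply (node_poly lam) (\<lambda>t. ?y t + vec_lambda (barycentric_weight lam) \<bullet> ?x x0 t) j = 0"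
      using assms(2) by (simp add: shift_apply_node_poly_quotient_output[OF assms(1)] degree_node_poly)
  qed (simp add: x0 degree_node_poly)
  then show ?thesis by (rule that)
qed

lemma hankel_combination_eq_shift_apply:
  fixes q :: "'m::finite \<Rightarrow> real poly"
  assumes "\<And>a. degree (q a) < k"
  shows "(\<Sum>i<k. \<Sum>a\<in>UNIV. coeff (q a) i * hankel k u i a j)
           = (\<Sum>a\<in>UNIV. shift_apply (q a) (\<lambda>s. u s $ a) j)"
  by (simp add: shift_apply_eq_sum[OF assms] hankel_def sum.swap[of _ UNIV] add.commute)

lemma not_persistently_exciting_poly_relation:
  fixes u :: "nat \<Rightarrow> real^'m"
  assumes "1 \<le> k" and "\<not> persistently_exciting T k u"
  obtains p :: "'m \<Rightarrow> real poly" and a0 where "p a0 \<noteq> 0" and "\<And>a. degree (p a) < k"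
    and "\<And>j. j + k \<le> T \<Longrightarrow> (\<Sum>a\<in>UNIV. shift_apply (p a) (\<lambda>s. u s $ a) j) = 0"
proof (cases "k \<le> T")
  case False
  show ?thesis
    by (rule that[of "\<lambda>a. 1" undefined]) (use False assms(1) in auto)
next
  case True
  then obtain c :: "nat \<Rightarrow> real^'m" and i0 where c0: "i0 < k" "c i0 \<noteq> 0"
    and c: "\<And>j. j \<le> T - k \<Longrightarrow> (\<Sum>i<k. \<Sum>a\<in>UNIV. c i $ a * hankel k u i a j) = 0"
    using assms by (auto simp: persistently_exciting_def hankel_full_row_rank_def)
  obtain a0 where a0: "c i0 $ a0 \<noteq> 0"
    using c0(2) by (metis vec_eq_iff zero_index)
  define p where "p a = (\<Sum>i<k. monom (c i $ a) i)" for a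
  have coeff_p: "coeff (p a) i = (if i < k then c i $ a else 0)" for a i
    by (simp add: p_def coeff_sum coeff_monom)
  have degree_p: "degree (p a) < k" for a
    using assms(1) by (intro degree_lessI) (auto simp: coeff_p)
  show ?thesis
  proof (rule that[of p a0])
    show "p a0 \<noteq> 0"
      using c0(1) a0 coeff_p[of a0 i0] by auto
    fix j assume "j + k \<le> T"
    then show "(\<Sum>a\<in>UNIV. shift_apply (p a) (\<lambda>s. u s $ a) j) = 0"
      using c[of j] hankel_combination_eq_shift_apply[of p k u j, OF degree_p]
      by (simp add: coeff_p)
  qed (rule degree_p)
qed

theorem lemma1:
  fixes u :: "nat \<Rightarrow> real^'m" and T L :: nat
  assumes "1 \<le> L" and "L \<le> T"
    and "\<not> persistently_exciting T (CARD('n) + L) u"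
  shows "\<exists>(A :: real^'n^'n) (B :: real^'m^'n) (x :: nat \<Rightarrow> real^'n) (v :: nat \<Rightarrow> real^'m) (w :: real^'n).
           controllable A B
         \<and> (\<forall>t < T - L. x (t + 1) = A *v x t + B *v u t)
         \<and> w \<noteq> 0
         \<and> (\<forall>j \<le> T - L. (\<Sum>i<L. \<Sum>a\<in>UNIV. v i $ a * hankel L u i a j) + w \<bullet> x j = 0)"
proof -
  obtain p a0 where p: "p a0 \<noteq> 0" and degree_p: "\<And>a. degree (p a) < CARD('n) + L"
    and relation: "\<And>j. j + (CARD('n) + L) \<le> T \<Longrightarrow> (\<Sum>a\<in>UNIV. shift_apply (p a) (\<lambda>s. u s $ a) j) = 0"
    using not_persistently_exciting_poly_relation[OF _ assms(3)] assms(1) by auto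
  obtain lam :: "'n \<Rightarrow> real" where lam: "inj lam" "\<And>k. poly (p a0) (lam k) \<noteq> 0"
    using inj_avoiding_roots[OF p] by blast
  define A where "A = diag_mat lam"
  define B :: "real^'m^'n" where "B = (\<chi> k a. poly (p a) (lam k))"
  define w :: "real^'n" where "w = vec_lambda (barycentric_weight lam)"
  define v :: "nat \<Rightarrow> real^'m" where "v i = (\<chi> a. coeff (p a div node_poly lam) i)" for i
  have "(\<Sum>a\<in>UNIV. shift_apply (p a) (\<lambda>s. u s $ a) j) = 0" if "j + CARD('n) \<le> T - L" for j
    using that assms(2) by (intro relation) linarith
  then obtain x0 where x0: "\<And>t. t \<le> T - L \<Longrightarrow> (\<Sum>a\<in>UNIV. shift_apply (p a div node_poly lam) (\<lambda>s. u s $ a) t)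
      + w \<bullet> state_trajectory A B u x0 t = 0"
    using diag_output_cancels_quotients[OF lam(1)] unfolding A_def B_def w_def by blast
  have "degree (p a div node_poly lam) < L" for a
    using degree_div_le[of "p a" "node_poly lam"] degree_p[of a] assms(1)
    by (simp add: degree_node_poly)
  then have "(\<Sum>i<L. \<Sum>a\<in>UNIV. v i $ a * hankel L u i a t)
      = (\<Sum>a\<in>UNIV. shift_apply (p a div node_poly lam) (\<lambda>s. u s $ a) t)" for t
    by (simp add: v_def hankel_combination_eq_shift_apply)
  moreover have "controllable A B"
    unfolding A_def by (rule controllable_diag_mat[OF lam(1), of _ a0]) (simp add: B_def lam(2))
  moreover have "w \<noteq> 0"
    by (simp add: w_def vec_eq_iff barycentric_weight_nonzero[OF lam(1)])
  ultimately show ?thesis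
    using x0 by (intro exI[of _ A] exI[of _ B] exI[of _ "state_trajectory A B u x0"] exI[of _ v] exI[of _ w])
      simp
qed

end
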